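(* Let $f:(0,\infty)\to(0,\infty)$ be continuous, let $F(x)=\int_x^1\frac{du}{f(u)}$ for $x>0$, and suppose $\lim_{x\to0^+}F(x)=+\infty$, so that the inverse $F^{-1}$ of the strictly decreasing function $F$ is defined for all large $t$. If $f\in\mathrm{RV}_0(\infty)$, i.e. \[ \lim_{x\to0^+}\frac{f(\lambda x)}{f(x)}=\begin{cases}+\infty,&\lambda>1,\\ 0,&\lambda<1,\end{cases} \] then $F^{-1}\in\mathrm{RV}_\infty(0)$.
   Context: $\mathrm{RV}_\infty(0)$ (slowly varying at infinity): measurable positive $h$ with $\lim_{t\to\infty}h(\lambda t)/h(t)=1$ for every $\lambda>0$. *)

theory Defs
  imports "HOL-Analysis.Analysis"
begin

definition Fint :: "(real \<Rightarrow> real) \<Rightarrow> real \<Rightarrow> real" where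
  "Fint f x = (if x \<le> 1 then integral {x..1} (\<lambda>u. 1 / f u)
               else - integral {1..x} (\<lambda>u. 1 / f u))"

text \<open>The inverse of F on (0,infinity): the unique x > 0 with F x = t (where it exists).\<close>
definition Finv :: "(real \<Rightarrow> real) \<Rightarrow> real \<Rightarrow> real" where
  "Finv f t = (THE x. 0 < x \<and> Fint f x = t)"

definition slowly_varying_at_top :: "(real \<Rightarrow> real) \<Rightarrow> bool" where
  "slowly_varying_at_top h \<longleftrightarrow>
     (\<exists>T. (\<forall>t\<ge>T. 0 < h t) \<and> set_borel_measurable borel {T..} h) \<and>
     (\<forall>c>0. ((\<lambda>t. h (c * t) / h t) \<longlongrightarrow> 1) at_top)"

end

theory Submission
  imports Defs
begin

text \<open>For \<open>0 < l < 1\<close> the hypothesis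
  \<open>f(l x)/f(x) \<rightarrow> 0\<close> makes \<open>x \<mapsto> F(l x) - (c+1) F(x)\<close> nonincreasing near \<open>0\<close>, hence bounded
  below there; as \<open>F(x) \<rightarrow> \<infinity>\<close>, this gives \<open>F(l x) \<ge> c F(x)\<close> for all small \<open>x\<close>. Taking
  \<open>x = F\<^sup>-\<^sup>1(t) \<rightarrow> 0\<close> yields \<open>l F\<^sup>-\<^sup>1(t) \<le> F\<^sup>-\<^sup>1(c t) \<le> F\<^sup>-\<^sup>1(t)\<close> for \<open>c \<ge> 1\<close> and large \<open>t\<close>; the case
  \<open>c < 1\<close> follows by inverting the ratio.\<close>

lemma set_borel_measurable_antimono_on:
  fixes h :: "real \<Rightarrow> real"
  assumes "antimono_on S h" and "S \<in> sets borel"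
  shows "set_borel_measurable borel S h"
proof -
  have "mono_on S (\<lambda>x. - h x)"
    using assms(1) by (auto simp: monotone_on_def)
  then have "(\<lambda>x. - (- h x)) \<in> borel_measurable (restrict_space borel S)"
    by (intro borel_measurable_uminus borel_measurable_mono_on_fnc)
  then show ?thesis
    unfolding set_borel_measurable_def using assms(2)
    by (simp add: borel_measurable_restrict_space_iff)
qed

lemma tendsto_ratio_scale_inverse:
  fixes h :: "real \<Rightarrow> real"
  assumes lim: "((\<lambda>t. h (c * t) / h t) \<longlongrightarrow> 1) at_top" and c: "0 < c"
  shows "((\<lambda>t. h (1 / c * t) / h t) \<longlongrightarrow> 1) at_top"
proof -
  have "filterlim (\<lambda>t. 1 / c * t) at_top at_top"
    using c by (intro filterlim_tendsto_pos_mult_at_top[OF tendsto_const _ filterlim_ident]) simp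
  from filterlim_compose[OF lim this]
  have "((\<lambda>t. h t / h (1 / c * t)) \<longlongrightarrow> 1) at_top"
    using c by (simp add: o_def)
  then have "((\<lambda>t. inverse (h t / h (1 / c * t))) \<longlongrightarrow> inverse 1) at_top"
    by (rule tendsto_inverse) simp
  then show ?thesis
    by simp
qed

context
  fixes f :: "real \<Rightarrow> real"
  assumes cont: "continuous_on {0<..} f" and pos: "\<And>x. 0 < x \<Longrightarrow> 0 < f x"
begin

lemma continuous_on_inverse_f:
  assumes "0 < a"
  shows "continuous_on {a..b} (\<lambda>u. 1 / f u)"
proof (intro continuous_on_divide continuous_on_subset[OF cont] ballI)
  fix u assume "u \<in> {a..b}"
  then show "f u \<noteq> 0"
    using assms pos[of u] by simp
qed (use assms in auto)

lemma Fint_eq_integral_diff: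
  assumes "0 < a" "a \<le> 1" "a \<le> x"
  shows "Fint f x = integral {a..1} (\<lambda>u. 1 / f u) - integral {a..x} (\<lambda>u. 1 / f u)"
proof -
  have int: "(\<lambda>u. 1 / f u) integrable_on {a..b}" for b
    using continuous_on_inverse_f[OF \<open>0 < a\<close>] integrable_continuous_interval by blast
  show ?thesis
  proof (cases "x \<le> 1")
    case True
    then have "integral {a..x} (\<lambda>u. 1 / f u) + integral {x..1} (\<lambda>u. 1 / f u)
             = integral {a..1} (\<lambda>u. 1 / f u)"
      using assms int by (intro Henstock_Kurzweil_Integration.integral_combine) auto
    then show ?thesis
      using True by (simp add: Fint_def)
  next
    case False
    then have "integral {a..1} (\<lambda>u. 1 / f u) + integral {1..x} (\<lambda>u. 1 / f u)
             = integral {a..x} (\<lambda>u. 1 / f u)"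
      using assms int by (intro Henstock_Kurzweil_Integration.integral_combine) auto
    then show ?thesis
      using False by (simp add: Fint_def)
  qed
qed

lemma has_real_derivative_Fint:
  assumes y: "0 < y"
  shows "(Fint f has_real_derivative - (1 / f y)) (at y)"
proof -
  define a where "a = min (y / 2) 1"
  have a: "0 < a" "a \<le> 1" "a < y"
    using y by (auto simp: a_def)
  have "((\<lambda>x. integral {a..x} (\<lambda>u. 1 / f u)) has_real_derivative 1 / f y)
          (at y within {a..y + 1})"
    using a by (intro integral_has_real_derivative continuous_on_inverse_f) auto
  then have "((\<lambda>x. integral {a..x} (\<lambda>u. 1 / f u)) has_real_derivative 1 / f y) (at y)"
    using a by (simp add: at_within_Icc_at)
  then have "((\<lambda>x. integral {a..1} (\<lambda>u. 1 / f u) - integral {a..x} (\<lambda>u. 1 / f u))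
               has_real_derivative - (1 / f y)) (at y)"
    using DERIV_diff[OF DERIV_const] by fastforce
  then show ?thesis
    by (rule has_field_derivative_transform_within_open[where S = "{a<..}"])
       (use a Fint_eq_integral_diff in auto)
qed

lemma Fint_strict_antimono:
  assumes "0 < x" "x < y"
  shows "Fint f y < Fint f x"
proof (rule DERIV_neg_imp_decreasing[OF \<open>x < y\<close>])
  fix z assume "x \<le> z"
  then have "0 < z"
    using assms by simp
  then show "\<exists>d. (Fint f has_real_derivative d) (at z) \<and> d < 0"
    using has_real_derivative_Fint pos by force
qed

lemma Fint_le_iff: "0 < x \<Longrightarrow> 0 < y \<Longrightarrow> Fint f x \<le> Fint f y \<longleftrightarrow> y \<le> x"
  using Fint_strict_antimono by (metis linorder_not_less order_less_imp_le order_less_le)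

lemma continuous_on_Fint: "continuous_on {0<..} (Fint f)"
  using has_real_derivative_Fint DERIV_isCont
  by (intro continuous_at_imp_continuous_on) auto

context
  assumes F_inf: "filterlim (Fint f) at_top (at_right 0)"
begin

lemma eventually_Fint_scaled_ge:
  assumes ratio: "((\<lambda>x. f (l * x) / f x) \<longlongrightarrow> 0) (at_right 0)"
    and l: "0 < l" and c: "0 \<le> c"
  shows "eventually (\<lambda>x. c * Fint f x \<le> Fint f (l * x)) (at_right 0)"
proof -
  have "eventually (\<lambda>x. f (l * x) / f x < l / (c + 1)) (at_right 0)"
    using ratio l c by (auto intro: order_tendstoD)
  then obtain d where d: "0 < d" "\<And>x. 0 < x \<Longrightarrow> x < d \<Longrightarrow> f (l * x) / f x < l / (c + 1)"
    by (auto simp: eventually_at_right_field)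
  define \<psi> where "\<psi> x = Fint f (l * x) - (c + 1) * Fint f x" for x
  \<comment> \<open>\<open>\<psi>' x = (c + 1) / f x - l / f (l * x)\<close>, which the ratio bound makes nonpositive\<close>
  have \<psi>_deriv: "\<exists>D. (\<psi> has_real_derivative D) (at y) \<and> D \<le> 0" if y: "0 < y" "y < d" for y
  proof -
    have fpos: "0 < f y" "0 < f (l * y)"
      using pos y l by auto
    have "((\<lambda>x. Fint f (l * x)) has_real_derivative - (1 / f (l * y)) * l) (at y)"
      using DERIV_chain2[OF has_real_derivative_Fint DERIV_cmult_Id[of l]] y l by simp
    then have "(\<psi> has_real_derivative - (1 / f (l * y)) * l - (c + 1) * - (1 / f y)) (at y)"
      unfolding \<psi>_def using y by (intro DERIV_diff DERIV_cmult has_real_derivative_Fint) auto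
    moreover have "f (l * y) * (c + 1) < l * f y"
      using d(2)[OF y] fpos c by (simp add: divide_simps)
    then have "(c + 1) / f y \<le> l / f (l * y)"
      using fpos c by (simp add: divide_simps mult.commute)
    ultimately show ?thesis
      by force
  qed
  have \<psi>_lower: "\<psi> (d / 2) \<le> \<psi> x" if "0 < x" "x \<le> d / 2" for x
    by (rule DERIV_nonpos_imp_nonincreasing[OF \<open>x \<le> d / 2\<close>]) (use \<psi>_deriv that d in auto)
  have "eventually (\<lambda>x. \<bar>\<psi> (d / 2)\<bar> \<le> Fint f x) (at_right 0)"
    using F_inf by (simp add: filterlim_at_top)
  moreover have "eventually (\<lambda>x. 0 < x \<and> x < d / 2) (at_right 0)"
    using d(1) by (auto simp: eventually_at_right_field intro!: exI[of _ "d / 2"])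
  ultimately show ?thesis
  proof eventually_elim
    case (elim x)
    then show ?case
      using \<psi>_lower[of x] unfolding \<psi>_def by (auto simp: algebra_simps)
  qed
qed

lemma Finv_pos_Fint_Finv:
  assumes t: "0 \<le> t"
  shows "0 < Finv f t" and "Fint f (Finv f t) = t"
proof -
  have "eventually (\<lambda>x. t \<le> Fint f x) (at_right 0)"
    using F_inf by (simp add: filterlim_at_top)
  then obtain b where b: "0 < b" "\<And>x. 0 < x \<Longrightarrow> x < b \<Longrightarrow> t \<le> Fint f x"
    by (auto simp: eventually_at_right_field)
  define a where "a = min (b / 2) 1"
  have a: "0 < a" "a \<le> 1" "t \<le> Fint f a"
    using b by (auto simp: a_def)
  have "continuous_on {a..1} (Fint f)"
    using continuous_on_Fint by (rule continuous_on_subset) (use a in auto)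
  then obtain x where x: "a \<le> x" "Fint f x = t"
    using IVT2'[of "Fint f" 1 t a] a t by (auto simp: Fint_def)
  have "Finv f t = x"
    unfolding Finv_def
  proof (rule the_equality)
    show "0 < x \<and> Fint f x = t"
      using x a by simp
    fix y assume "0 < y \<and> Fint f y = t"
    then show "y = x"
      using Fint_le_iff[of x y] Fint_le_iff[of y x] x a by auto
  qed
  with x a show "0 < Finv f t" "Fint f (Finv f t) = t"
    by auto
qed

lemma Finv_antimono:
  assumes "0 \<le> s" "s \<le> t"
  shows "Finv f t \<le> Finv f s"
  using Fint_le_iff[of "Finv f s" "Finv f t"] Finv_pos_Fint_Finv[of s] Finv_pos_Fint_Finv[of t] assms
  by simp

lemma Finv_tendsto_0: "filterlim (Finv f) (at_right 0) at_top"
proof (rule tendsto_imp_filterlim_at_right)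
  show "eventually (\<lambda>t. 0 < Finv f t) at_top"
    using eventually_ge_at_top[of 0] by eventually_elim (rule Finv_pos_Fint_Finv)
  show "(Finv f \<longlongrightarrow> 0) at_top"
  proof (rule order_tendstoI)
    fix b :: real assume "0 < b"
    show "eventually (\<lambda>t. Finv f t < b) at_top"
      using eventually_gt_at_top[of "max 0 (Fint f b)"]
    proof eventually_elim
      case (elim t)
      then show ?case
        using Fint_le_iff[of "Finv f t" b] Finv_pos_Fint_Finv[of t] \<open>0 < b\<close> by force
    qed
  next
    fix a :: real assume "a < 0"
    show "eventually (\<lambda>t. a < Finv f t) at_top"
      using eventually_ge_at_top[of 0]
      by eventually_elim (use Finv_pos_Fint_Finv(1) \<open>a < 0\<close> in force)
  qed
qed

lemma Finv_ratio_tendsto_1: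
  assumes rv_small: "\<And>l. 0 < l \<Longrightarrow> l < 1 \<Longrightarrow> ((\<lambda>x. f (l * x) / f x) \<longlongrightarrow> 0) (at_right 0)"
    and c: "1 \<le> c"
  shows "((\<lambda>t. Finv f (c * t) / Finv f t) \<longlongrightarrow> 1) at_top"
proof (rule order_tendstoI)
  fix a :: real assume "a < 1"
  define l where "l = (max a 0 + 1) / 2"
  have l: "0 < l" "l < 1" "a < l"
    using \<open>a < 1\<close> by (auto simp: l_def)
  have "eventually (\<lambda>t. c * Fint f (Finv f t) \<le> Fint f (l * Finv f t)) at_top"
    using eventually_compose_filterlim[OF eventually_Fint_scaled_ge[OF rv_small] Finv_tendsto_0]
      l c by simp
  then show "eventually (\<lambda>t. a < Finv f (c * t) / Finv f t) at_top"
    using eventually_ge_at_top[of 0]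
  proof eventually_elim
    case (elim t)
    then have "Fint f (l * Finv f t) \<ge> Fint f (Finv f (c * t))"
      using Finv_pos_Fint_Finv[of t] Finv_pos_Fint_Finv[of "c * t"] c by simp
    then have "l * Finv f t \<le> Finv f (c * t)"
      using Fint_le_iff[of "Finv f (c * t)" "l * Finv f t"] Finv_pos_Fint_Finv(1)[of t]
        Finv_pos_Fint_Finv(1)[of "c * t"] l(1) elim(2) c by simp
    moreover have "a * Finv f t < l * Finv f t"
      using mult_strict_right_mono[OF l(3) Finv_pos_Fint_Finv(1)[OF elim(2)]] .
    ultimately have "a * Finv f t < Finv f (c * t)"
      by linarith
    then show ?case
      using Finv_pos_Fint_Finv(1)[OF elim(2)] by (simp add: less_divide_eq)
  qed
next
  fix b :: real assume "1 < b"
  show "eventually (\<lambda>t. Finv f (c * t) / Finv f t < b) at_top"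
    using eventually_ge_at_top[of 0]
  proof eventually_elim
    case (elim t)
    then have "Finv f (c * t) \<le> Finv f t"
      using Finv_antimono c by (simp add: mult_le_cancel_right1)
    moreover have "Finv f t < b * Finv f t"
      using mult_strict_right_mono[OF \<open>1 < b\<close> Finv_pos_Fint_Finv(1)[OF elim]] by simp
    ultimately have "Finv f (c * t) < b * Finv f t"
      by linarith
    then show ?case
      using Finv_pos_Fint_Finv(1)[OF elim] by (simp add: divide_less_eq)
  qed
qed

end

end

theorem mainTheorem9:
  fixes f :: "real \<Rightarrow> real"
  assumes cont: "continuous_on {0<..} f"
    and pos: "\<And>x. 0 < x \<Longrightarrow> 0 < f x"
    and F_inf: "filterlim (Fint f) at_top (at_right 0)"
    and rv_big: "\<And>c. c > 1 \<Longrightarrow> filterlim (\<lambda>x. f (c * x) / f x) at_top (at_right 0)"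
    and rv_small: "\<And>c. 0 < c \<Longrightarrow> c < 1 \<Longrightarrow> ((\<lambda>x. f (c * x) / f x) \<longlongrightarrow> 0) (at_right 0)"
  shows "slowly_varying_at_top (Finv f)"
  unfolding slowly_varying_at_top_def
proof (intro conjI allI impI exI[of _ 0])
  show "0 < Finv f t" if "0 \<le> t" for t
    using Finv_pos_Fint_Finv(1)[OF cont pos F_inf that] .
  have "antimono_on {0..} (Finv f)"
    using Finv_antimono[OF cont pos F_inf] by (simp add: monotone_on_def)
  then show "set_borel_measurable borel {0..} (Finv f)"
    by (rule set_borel_measurable_antimono_on) simp
next
  fix c :: real assume "0 < c"
  have ratio: "((\<lambda>t. Finv f (d * t) / Finv f t) \<longlongrightarrow> 1) at_top" if "1 \<le> d" for d
    using Finv_ratio_tendsto_1[OF cont pos F_inf _ that] rv_small by blast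
  show "((\<lambda>t. Finv f (c * t) / Finv f t) \<longlongrightarrow> 1) at_top"
  proof (cases "1 \<le> c")
    case False
    with \<open>0 < c\<close> have "1 \<le> 1 / c"
      by simp
    from tendsto_ratio_scale_inverse[OF ratio[OF this]] \<open>0 < c\<close> show ?thesis
      by simp
  qed (rule ratio)
qed

end
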